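(* Let $n$ be a positive integer and $G=(V,E)$ the complete graph on $n$ vertices. Let $\tau$ be a set of types, $f:\tau\to\mathbb{Q}_{\ge1}$ a fitness function, and $\alpha\in\tau$. Let $\beta^+=\arg\max\{f(\beta):\beta\in\tau\setminus\{\alpha\}\}$ and $\beta^-=\arg\min\{f(\beta):\beta\in\tau\setminus\{\alpha\}\}$, and suppose $f(\alpha)\ne f(\beta^+)$ and $f(\alpha)\ne f(\beta^-)$. Let $M_0:V\to\tau$ be a state and let $i$ be the number of vertices mapped to $\alpha$ by $M_0$. Then $$\frac{1-\left(f(\beta^+)/f(\alpha)\right)^i}{1-\left(f(\beta^+)/f(\alpha)\right)^n}\le\pi_\alpha(G,\tau,f,M_0)\le\frac{1-\left(f(\beta^-)/f(\alpha)\right)^i}{1-\left(f(\beta^-)/f(\alpha)\right)^n}.$$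
   Context: For $G=(V,E)$, $N(v)$ is the neighbourhood of $v$. For a state $S:V\to\tau$ and $v,w\in V$, $S|_{v\to w}$ equals $S$ except $w$ gets type $S(v)$. The Moran process $M(G,\tau,f,M_0)$ is the Markov chain on states started at $M_0$ in which, given $M_t$, a vertex $v$ is chosen with probability $f(M_t(v))/\sum_{u\in V}f(M_t(u))$, then $w\in N(v)$ uniformly at random, and $M_{t+1}=M_t|_{v\to w}$. $\pi_j(G,\tau,f,M_0)$ is the probability that at some time every vertex has type $j$. *)

theory Defs
  imports Complex_Main
begin

text \<open>A graph is given by its vertex set V and neighbourhood function N.
  States are functions S from vertices to types; only values on V matter.
  S|_{v->w} is S(w := S v).\<close>

definition all_type :: "'v set \<Rightarrow> ('v \<Rightarrow> 't) \<Rightarrow> 't \<Rightarrow> bool" where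
  "all_type V S j \<longleftrightarrow> (\<forall>v\<in>V. S v = j)"

text \<open>hit_within V N f j t S is the probability that the Moran process started
  in state S has, at some time in 0..t, every vertex of type j.
  (If N v is empty, choosing v leaves the state unchanged; this only matters
  for the one-vertex graph.)\<close>

fun hit_within :: "'v set \<Rightarrow> ('v \<Rightarrow> 'v set) \<Rightarrow> ('t \<Rightarrow> real) \<Rightarrow> 't \<Rightarrow> nat \<Rightarrow> ('v \<Rightarrow> 't) \<Rightarrow> real" where
  "hit_within V N f j 0 S = (if all_type V S j then 1 else 0)"
| "hit_within V N f j (Suc t) S =
     (if all_type V S j then 1
      else (\<Sum>v\<in>V. f (S v) / (\<Sum>u\<in>V. f (S u)) *
              (if N v = {} then hit_within V N f j t S
               else (\<Sum>w\<in>N v. hit_within V N f j t (S(w := S v))) / real (card (N v)))))"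

definition fixation_prob :: "'v set \<Rightarrow> ('v \<Rightarrow> 'v set) \<Rightarrow> ('t \<Rightarrow> real) \<Rightarrow> ('v \<Rightarrow> 't) \<Rightarrow> 't \<Rightarrow> real" where
  "fixation_prob V N f M0 j = (SUP t. hit_within V N f j t M0)"

definition complete_nbhd :: "nat \<Rightarrow> nat \<Rightarrow> nat set" where
  "complete_nbhd n v = {..<n} - {v}"

end

theory Submission
  imports Defs
begin

text \<open>Let X be the number of vertices of type \<alpha>, W the total fitness and B the total fitness
  of the other vertices. On the complete graph one step raises X by one with probability
  f(\<alpha>) X (n - X) / (W (n - 1)) and lowers it with probability B X / (W (n - 1)), and
  (n - X) f(\<beta>-) \<le> B \<le> (n - X) f(\<beta>+). The gambler's ruin function
  (1 - r^x) / (1 - r^n) is harmonic for a walk whose down/up ratio is r. For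
  r = f(\<beta>-) / f(\<alpha>) it is therefore superharmonic along X; being 1 at fixation and
  nonnegative, it bounds the fixation probability from above. For r > f(\<beta>+) / f(\<alpha>) it
  gains a uniform positive drift on every transient state with X > 0, so the probability of
  not yet being absorbed decays geometrically and it is a lower bound; letting r decrease to
  f(\<beta>+) / f(\<alpha>) gives the claim.\<close>

locale moran_process =
  fixes V :: "'v set" and N :: "'v \<Rightarrow> 'v set" and T :: "'t set" and F :: "'t \<Rightarrow> real"
  assumes finite_V: "finite V" and V_nonempty: "V \<noteq> {}"
    and N_subset: "\<And>v. v \<in> V \<Longrightarrow> N v \<subseteq> V"
    and F_pos: "\<And>x. x \<in> T \<Longrightarrow> 0 < F x"
begin

definition is_state :: "('v \<Rightarrow> 't) \<Rightarrow> bool" where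
  "is_state S \<longleftrightarrow> (\<forall>v\<in>V. S v \<in> T)"

definition total_fitness :: "('v \<Rightarrow> 't) \<Rightarrow> real" where
  "total_fitness S = (\<Sum>u\<in>V. F (S u))"

definition birth_average :: "(('v \<Rightarrow> 't) \<Rightarrow> real) \<Rightarrow> ('v \<Rightarrow> 't) \<Rightarrow> 'v \<Rightarrow> real" where
  "birth_average h S v =
     (if N v = {} then h S else (\<Sum>w\<in>N v. h (S(w := S v))) / real (card (N v)))"

definition next_expectation :: "(('v \<Rightarrow> 't) \<Rightarrow> real) \<Rightarrow> ('v \<Rightarrow> 't) \<Rightarrow> real" where
  "next_expectation h S = (\<Sum>v\<in>V. F (S v) / total_fitness S * birth_average h S v)"

abbreviation hit :: "'t \<Rightarrow> nat \<Rightarrow> ('v \<Rightarrow> 't) \<Rightarrow> real" where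
  "hit j t S \<equiv> hit_within V N F j t S"

lemma is_state_upd: "is_state S \<Longrightarrow> v \<in> V \<Longrightarrow> is_state (S(w := S v))"
  unfolding is_state_def by auto

lemma total_fitness_pos: "is_state S \<Longrightarrow> 0 < total_fitness S"
  unfolding is_state_def total_fitness_def
  using finite_V V_nonempty F_pos by (intro sum_pos) auto

lemma selection_probabilities_sum: "is_state S \<Longrightarrow> (\<Sum>v\<in>V. F (S v) / total_fitness S) = 1"
  using total_fitness_pos[of S] by (simp add: total_fitness_def flip: sum_divide_distrib)

lemma hit_within_Suc_not_all:
  "\<not> all_type V S j \<Longrightarrow> hit j (Suc t) S = next_expectation (hit j t) S"
  by (simp add: next_expectation_def birth_average_def total_fitness_def)

lemma birth_average_diff_const:
  assumes "v \<in> V"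
  shows "birth_average (\<lambda>S'. h S' - c) S v = birth_average h S v - c"
proof -
  have "finite (N v)" using N_subset[OF assms] finite_V finite_subset by blast
  then show ?thesis
    by (simp add: birth_average_def sum_subtractf diff_divide_distrib card_gt_0_iff)
qed

lemma next_expectation_diff_const:
  assumes "is_state S"
  shows "next_expectation (\<lambda>S'. h S' - c) S = next_expectation h S - c"
proof -
  have "next_expectation (\<lambda>S'. h S' - c) S
      = (\<Sum>v\<in>V. F (S v) / total_fitness S * birth_average h S v) - (\<Sum>v\<in>V. F (S v) / total_fitness S) * c"
    by (simp add: next_expectation_def birth_average_diff_const right_diff_distrib
        sum_subtractf sum_distrib_right)
  then show ?thesis
    using selection_probabilities_sum[OF assms] by (simp add: next_expectation_def)
qed

lemma next_expectation_const: "is_state S \<Longrightarrow> next_expectation (\<lambda>_. c) S = c"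
  using next_expectation_diff_const[of S "\<lambda>_. c" c]
  by (simp add: next_expectation_def birth_average_def cong: if_cong)

lemma next_expectation_mono:
  assumes "is_state S" and le: "\<And>S'. is_state S' \<Longrightarrow> h1 S' \<le> h2 S'"
  shows "next_expectation h1 S \<le> next_expectation h2 S"
  unfolding next_expectation_def
proof (rule sum_mono)
  fix v assume v: "v \<in> V"
  have "birth_average h1 S v \<le> birth_average h2 S v"
    unfolding birth_average_def
    using assms v is_state_upd by (auto intro!: sum_mono divide_right_mono)
  moreover have "0 \<le> F (S v) / total_fitness S"
    using assms(1) v F_pos total_fitness_pos by (simp add: is_state_def less_imp_le)
  ultimately show "F (S v) / total_fitness S * birth_average h1 S v
      \<le> F (S v) / total_fitness S * birth_average h2 S v"
    by (rule mult_left_mono)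
qed

lemma hit_within_nonneg: "is_state S \<Longrightarrow> 0 \<le> hit j t S"
proof (induction t arbitrary: S)
  case (Suc t)
  show ?case
  proof (cases "all_type V S j")
    case False
    have "0 \<le> next_expectation (hit j t) S"
      using next_expectation_mono[of S "\<lambda>_. 0" "hit j t"] Suc
      by (simp add: next_expectation_const)
    then show ?thesis by (simp only: hit_within_Suc_not_all[OF False])
  qed simp
qed simp

lemma hit_within_le_superharmonic:
  assumes nonneg: "\<And>S. is_state S \<Longrightarrow> 0 \<le> g S"
    and absorbed: "\<And>S. is_state S \<Longrightarrow> all_type V S j \<Longrightarrow> 1 \<le> g S"
    and superharmonic: "\<And>S. is_state S \<Longrightarrow> \<not> all_type V S j \<Longrightarrow> next_expectation g S \<le> g S"
  shows "is_state S \<Longrightarrow> hit j t S \<le> g S"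
proof (induction t arbitrary: S)
  case 0
  then show ?case using nonneg absorbed by simp
next
  case (Suc t)
  show ?case
  proof (cases "all_type V S j")
    case False
    have "hit j (Suc t) S \<le> next_expectation g S"
      unfolding hit_within_Suc_not_all[OF False]
      using Suc by (intro next_expectation_mono)
    also have "\<dots> \<le> g S" using superharmonic Suc.prems False .
    finally show ?thesis .
  qed (use Suc.prems absorbed in simp)
qed

lemma hit_within_le_one: "is_state S \<Longrightarrow> hit j t S \<le> 1"
  by (rule hit_within_le_superharmonic) (simp_all add: next_expectation_const)

lemma hit_within_ge_subharmonic:
  assumes c: "0 < c" "c \<le> 1"
    and le_one: "\<And>S. is_state S \<Longrightarrow> g S \<le> 1"
    and subharmonic: "\<And>S. is_state S \<Longrightarrow> \<not> all_type V S j \<Longrightarrow>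
        g S \<le> 0 \<or> g S + c \<le> next_expectation g S"
  shows "is_state S \<Longrightarrow> g S - (1 - c) ^ t \<le> hit j t S"
proof (induction t arbitrary: S)
  case 0
  then show ?case using le_one[OF 0] hit_within_nonneg[OF 0, of j 0] by simp
next
  case (Suc t)
  have decay: "0 \<le> (1 - c) ^ t" "(1 - c) ^ t \<le> 1" "0 \<le> (1 - c) ^ Suc t"
    using c by (simp_all add: power_le_one)
  show ?case
  proof (cases "all_type V S j")
    case True
    then show ?thesis using le_one[OF Suc.prems] decay(3) by simp
  next
    case False
    consider "g S \<le> 0" | "g S + c \<le> next_expectation g S"
      using subharmonic[OF Suc.prems False] by blast
    then show ?thesis
    proof cases
      case 1
      then show ?thesis using hit_within_nonneg[OF Suc.prems, of j "Suc t"] decay(3) by linarith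
    next
      case 2
      have "next_expectation g S - (1 - c) ^ t \<le> hit j (Suc t) S"
        unfolding hit_within_Suc_not_all[OF False] next_expectation_diff_const[OF Suc.prems, symmetric]
        using Suc.IH by (intro next_expectation_mono[OF Suc.prems])
      moreover have "(1 - c) ^ t - (1 - c) ^ Suc t \<le> c"
        using decay c by (simp add: algebra_simps mult_left_le_one_le)
      ultimately show ?thesis using 2 by simp
    qed
  qed
qed

lemma fixation_prob_le_superharmonic:
  assumes "\<And>S. is_state S \<Longrightarrow> 0 \<le> g S"
    and "\<And>S. is_state S \<Longrightarrow> all_type V S j \<Longrightarrow> 1 \<le> g S"
    and "\<And>S. is_state S \<Longrightarrow> \<not> all_type V S j \<Longrightarrow> next_expectation g S \<le> g S"
    and "is_state S"
  shows "fixation_prob V N F S j \<le> g S"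
  unfolding fixation_prob_def
  by (rule cSUP_least) (use hit_within_le_superharmonic[OF assms] in auto)

lemma fixation_prob_ge_subharmonic:
  assumes "0 < c"
    and le_one: "\<And>S. is_state S \<Longrightarrow> g S \<le> 1"
    and subharmonic: "\<And>S. is_state S \<Longrightarrow> \<not> all_type V S j \<Longrightarrow>
        g S \<le> 0 \<or> g S + c \<le> next_expectation g S"
    and "is_state S"
  shows "g S \<le> fixation_prob V N F S j"
proof -
  define c' where "c' = min c 1"
  have c': "0 < c'" "c' \<le> 1" "c' \<le> c" using \<open>0 < c\<close> by (auto simp: c'_def)
  have subharmonic': "g S' \<le> 0 \<or> g S' + c' \<le> next_expectation g S'"
    if "is_state S'" "\<not> all_type V S' j" for S'
    using subharmonic[OF that] c'(3) by linarith
  have below: "g S - (1 - c') ^ t \<le> fixation_prob V N F S j" for t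
  proof -
    have "g S - (1 - c') ^ t \<le> hit j t S"
      by (rule hit_within_ge_subharmonic[OF c'(1,2) le_one subharmonic' \<open>is_state S\<close>])
    also have "\<dots> \<le> fixation_prob V N F S j"
      unfolding fixation_prob_def using hit_within_le_one[OF \<open>is_state S\<close>]
      by (intro cSUP_upper bdd_aboveI2) auto
    finally show ?thesis .
  qed
  have "(\<lambda>t. g S - (1 - c') ^ t) \<longlonglongrightarrow> g S - 0"
    using c' by (intro tendsto_intros LIMSEQ_power_zero) auto
  then show ?thesis using below by (intro LIMSEQ_le_const2) auto
qed

end
definition gamblers_ruin :: "nat \<Rightarrow> real \<Rightarrow> nat \<Rightarrow> real" where
  "gamblers_ruin n r x = (1 - r ^ x) / (1 - r ^ n)"

lemma gamblers_ruin_0 [simp]: "gamblers_ruin n r 0 = 0"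
  by (simp add: gamblers_ruin_def)

lemma power_ne_one: "0 \<le> r \<Longrightarrow> r \<noteq> 1 \<Longrightarrow> 0 < n \<Longrightarrow> (r::real) ^ n \<noteq> 1"
  using power_eq_1_iff[of r n] by auto

lemma gamblers_ruin_self [simp]: "0 \<le> r \<Longrightarrow> r \<noteq> 1 \<Longrightarrow> 0 < n \<Longrightarrow> gamblers_ruin n r n = 1"
  using power_ne_one by (simp add: gamblers_ruin_def)

lemma gamblers_ruin_Suc_diff:
  "gamblers_ruin n r (Suc x) - gamblers_ruin n r x = gamblers_ruin n r 1 * r ^ x"
  by (simp add: gamblers_ruin_def diff_divide_distrib [symmetric] algebra_simps)

lemma gamblers_ruin_nonneg:
  assumes "0 \<le> r" "x \<le> n"
  shows "0 \<le> gamblers_ruin n r x"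
proof (cases "r \<le> 1")
  case True
  then show ?thesis using assms by (simp add: gamblers_ruin_def power_le_one)
next
  case False
  then show ?thesis using assms by (simp add: gamblers_ruin_def divide_nonpos_nonpos one_le_power)
qed

lemma gamblers_ruin_le_one:
  assumes "0 \<le> r" "x \<le> n"
  shows "gamblers_ruin n r x \<le> 1"
proof (cases "r \<le> 1")
  case True
  then have "r ^ n \<le> r ^ x" "r ^ n \<le> 1" using assms by (simp_all add: power_decreasing power_le_one)
  then show ?thesis by (auto simp add: gamblers_ruin_def divide_le_eq_1)
next
  case False
  then have "r ^ x \<le> r ^ n" "1 \<le> r ^ n" using assms by (simp_all add: power_increasing)
  then show ?thesis by (auto simp add: gamblers_ruin_def divide_le_eq_1)
qed

lemma gamblers_ruin_pos:
  assumes "0 < r" "r \<noteq> 1" "0 < x" "x \<le> n"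
  shows "0 < gamblers_ruin n r x"
proof (cases "r < 1")
  case True
  then show ?thesis using assms by (simp add: gamblers_ruin_def power_less_one_iff)
next
  case False
  then have "1 < r" using assms by simp
  then show ?thesis using assms by (simp add: gamblers_ruin_def divide_neg_neg)
qed

locale moran_complete = moran_process "{..<n}" "complete_nbhd n" T F
  for n :: nat and T :: "'t set" and F :: "'t \<Rightarrow> real" +
  fixes \<alpha> :: 't
  assumes alpha_in_T: "\<alpha> \<in> T"
begin

definition num_alpha :: "(nat \<Rightarrow> 't) \<Rightarrow> nat" where
  "num_alpha S = card {v\<in>{..<n}. S v = \<alpha>}"

definition other_fitness :: "(nat \<Rightarrow> 't) \<Rightarrow> real" where
  "other_fitness S = (\<Sum>v\<in>{v\<in>{..<n}. S v \<noteq> \<alpha>}. F (S v))"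

lemma n_pos: "0 < n"
  using V_nonempty by auto

lemma F_alpha_pos: "0 < F \<alpha>"
  using F_pos alpha_in_T .

lemma num_alpha_le: "num_alpha S \<le> n"
  unfolding num_alpha_def using card_mono[OF finite_lessThan, of "{v\<in>{..<n}. S v = \<alpha>}" n] by auto

lemma card_not_alpha: "card {v\<in>{..<n}. S v \<noteq> \<alpha>} = n - num_alpha S"
proof -
  have "{v\<in>{..<n}. S v \<noteq> \<alpha>} = {..<n} - {v\<in>{..<n}. S v = \<alpha>}" by auto
  moreover have "card ({..<n} - {v\<in>{..<n}. S v = \<alpha>}) = n - card {v\<in>{..<n}. S v = \<alpha>}"
    by (subst card_Diff_subset) auto
  ultimately show ?thesis unfolding num_alpha_def by simp
qed

lemma all_type_iff_num_alpha: "all_type {..<n} S \<alpha> \<longleftrightarrow> num_alpha S = n"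
proof -
  have "all_type {..<n} S \<alpha> \<longleftrightarrow> {v\<in>{..<n}. S v \<noteq> \<alpha>} = {}"
    by (auto simp: all_type_def)
  also have "\<dots> \<longleftrightarrow> card {v\<in>{..<n}. S v \<noteq> \<alpha>} = 0" by simp
  finally show ?thesis using card_not_alpha[of S] num_alpha_le[of S] by linarith
qed

lemma num_alpha_upd:
  assumes "w < n"
  shows "num_alpha (S(w := c)) =
    (if c = \<alpha> \<and> S w \<noteq> \<alpha> then num_alpha S + 1
     else if c \<noteq> \<alpha> \<and> S w = \<alpha> then num_alpha S - 1 else num_alpha S)"
proof -
  have "{v\<in>{..<n}. (S(w := c)) v = \<alpha>} =
      (if c = \<alpha> then insert w {v\<in>{..<n}. S v = \<alpha>} else {v\<in>{..<n}. S v = \<alpha>} - {w})"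
    using assms by auto
  then show ?thesis
    unfolding num_alpha_def using assms by (auto simp: card_insert_if card_Diff_singleton_if)
qed

lemma birth_average_num_alpha:
  fixes \<phi> :: "nat \<Rightarrow> real" and S :: "nat \<Rightarrow> 't"
  assumes "v < n"
  defines "x \<equiv> num_alpha S"
  shows "birth_average (\<lambda>S'. \<phi> (num_alpha S')) S v = \<phi> x +
    (if S v = \<alpha> then real (n - x) * (\<phi> (x + 1) - \<phi> x) else real x * (\<phi> (x - 1) - \<phi> x))
      / real (n - 1)"
proof (cases "n = 1")
  case True
  \<comment> \<open>no neighbours; the right-hand side collapses because division by zero yields 0\<close>
  then have "complete_nbhd n v = {}" "real (n - 1) = 0"
    using assms by (auto simp: complete_nbhd_def)
  then show ?thesis by (simp add: birth_average_def x_def)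
next
  case False
  then have "(if v = 0 then 1 else 0) \<in> {..<n} - {v}"
    using n_pos by auto
  then have nbhd: "complete_nbhd n v = {..<n} - {v}" "{..<n} - {v} \<noteq> {}" "0 < real (n - 1)"
    using False n_pos by (auto simp: complete_nbhd_def)
  define d where "d w = (if S v = \<alpha> then (if S w \<noteq> \<alpha> then \<phi> (x + 1) - \<phi> x else 0)
      else (if S w = \<alpha> then \<phi> (x - 1) - \<phi> x else 0))" for w
  have "card ({..<n} - {v}) = n - 1"
    using assms by simp
  then have "birth_average (\<lambda>S'. \<phi> (num_alpha S')) S v
      = (\<Sum>w\<in>{..<n} - {v}. \<phi> (num_alpha (S(w := S v)))) / real (n - 1)"
    using nbhd by (simp add: birth_average_def)
  also have "(\<Sum>w\<in>{..<n} - {v}. \<phi> (num_alpha (S(w := S v)))) = (\<Sum>w\<in>{..<n} - {v}. \<phi> x + d w)"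
    by (intro sum.cong) (auto simp: num_alpha_upd d_def x_def)
  also have "\<dots> = real (n - 1) * \<phi> x + (\<Sum>w<n. d w)"
    using assms sum.remove[of "{..<n}" v d] by (simp add: sum.distrib d_def)
  also have "(\<Sum>w<n. d w) =
      (if S v = \<alpha> then real (n - x) * (\<phi> (x + 1) - \<phi> x) else real x * (\<phi> (x - 1) - \<phi> x))"
    using card_not_alpha[of S] by (simp add: d_def sum.inter_filter [symmetric] x_def num_alpha_def)
  finally show ?thesis
    using nbhd(3) by (simp add: field_simps)
qed

lemma next_expectation_num_alpha:
  fixes \<phi> :: "nat \<Rightarrow> real" and S :: "nat \<Rightarrow> 't"
  assumes S: "is_state S"
  defines "x \<equiv> num_alpha S"
  shows "next_expectation (\<lambda>S'. \<phi> (num_alpha S')) S = \<phi> x +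
    real x / (total_fitness S * real (n - 1)) *
      (F \<alpha> * real (n - x) * (\<phi> (x + 1) - \<phi> x) + other_fitness S * (\<phi> (x - 1) - \<phi> x))"
proof -
  define e where "e v = (if S v = \<alpha> then real (n - x) * (\<phi> (x + 1) - \<phi> x)
      else real x * (\<phi> (x - 1) - \<phi> x))" for v
  have "next_expectation (\<lambda>S'. \<phi> (num_alpha S')) S
      = (\<Sum>v<n. F (S v) / total_fitness S * \<phi> x + F (S v) * e v / (total_fitness S * real (n - 1)))"
    unfolding next_expectation_def
  proof (intro sum.cong)
    fix v assume "v \<in> {..<n}"
    then have "birth_average (\<lambda>S'. \<phi> (num_alpha S')) S v = \<phi> x + e v / real (n - 1)"
      by (simp add: birth_average_num_alpha e_def x_def)
    then show "F (S v) / total_fitness S * birth_average (\<lambda>S'. \<phi> (num_alpha S')) S v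
        = F (S v) / total_fitness S * \<phi> x + F (S v) * e v / (total_fitness S * real (n - 1))"
      by (simp add: distrib_left)
  qed simp
  also have "\<dots> = (\<Sum>v<n. F (S v) / total_fitness S) * \<phi> x
      + (\<Sum>v<n. F (S v) * e v) / (total_fitness S * real (n - 1))"
    by (simp add: sum.distrib sum_distrib_right sum_divide_distrib)
  also have "(\<Sum>v<n. F (S v) * e v)
      = (\<Sum>v\<in>{v\<in>{..<n}. S v = \<alpha>}. F \<alpha> * (real (n - x) * (\<phi> (x + 1) - \<phi> x)))
      + (\<Sum>v\<in>{v\<in>{..<n}. S v \<noteq> \<alpha>}. F (S v) * (real x * (\<phi> (x - 1) - \<phi> x)))"
    by (simp add: e_def sum.If_cases Int_def set_diff_eq if_distrib cong: if_cong)
  also have "\<dots> = real x * (F \<alpha> * real (n - x) * (\<phi> (x + 1) - \<phi> x)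
      + other_fitness S * (\<phi> (x - 1) - \<phi> x))"
    by (simp add: x_def num_alpha_def other_fitness_def distrib_left sum_distrib_left
        sum_distrib_right mult_ac)
  finally show ?thesis
    using selection_probabilities_sum[OF S] by simp
qed

lemma next_expectation_gamblers_ruin:
  assumes "is_state S" "num_alpha S = Suc k"
  shows "next_expectation (\<lambda>S'. gamblers_ruin n r (num_alpha S')) S
    = gamblers_ruin n r (num_alpha S) + real (num_alpha S) / (total_fitness S * real (n - 1)) *
        (gamblers_ruin n r 1 * r ^ k * (F \<alpha> * real (n - num_alpha S) * r - other_fitness S))"
proof -
  have up: "gamblers_ruin n r (num_alpha S + 1) - gamblers_ruin n r (num_alpha S)
      = gamblers_ruin n r 1 * r ^ k * r"
    using assms(2) gamblers_ruin_Suc_diff[of n r "Suc k"] by simp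
  have down: "gamblers_ruin n r (num_alpha S - 1) - gamblers_ruin n r (num_alpha S)
      = - (gamblers_ruin n r 1 * r ^ k)"
    using assms(2) gamblers_ruin_Suc_diff[of n r k] by simp
  show ?thesis
    unfolding next_expectation_num_alpha[OF assms(1)] up down by (simp add: algebra_simps)
qed

lemma other_fitness_ge:
  assumes "is_state S" "\<forall>y\<in>T - {\<alpha>}. lo \<le> F y"
  shows "real (n - num_alpha S) * lo \<le> other_fitness S"
  unfolding other_fitness_def card_not_alpha [symmetric]
  using assms by (intro sum_bounded_below) (auto simp: is_state_def)

lemma other_fitness_le:
  assumes "is_state S" "\<forall>y\<in>T - {\<alpha>}. F y \<le> hi"
  shows "other_fitness S \<le> real (n - num_alpha S) * hi"
  unfolding other_fitness_def card_not_alpha [symmetric]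
  using assms by (intro sum_bounded_above) (auto simp: is_state_def)

lemma total_fitness_le:
  assumes "is_state S" "\<forall>y\<in>T - {\<alpha>}. F y \<le> hi"
  shows "total_fitness S \<le> real n * max (F \<alpha>) hi"
proof -
  have "F (S v) \<le> max (F \<alpha>) hi" if "v < n" for v
    using assms that by (cases "S v = \<alpha>") (auto simp: is_state_def intro: max.coboundedI2)
  then show ?thesis
    unfolding total_fitness_def using sum_bounded_above[of "{..<n}" "\<lambda>v. F (S v)"] by simp
qed

lemma gamblers_ruin_superharmonic:
  assumes S: "is_state S" and lo: "\<forall>y\<in>T - {\<alpha>}. lo \<le> F y" "0 \<le> lo"
  defines "r \<equiv> lo / F \<alpha>"
  shows "next_expectation (\<lambda>S'. gamblers_ruin n r (num_alpha S')) S \<le> gamblers_ruin n r (num_alpha S)"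
proof (cases "num_alpha S")
  case 0
  then show ?thesis by (simp add: next_expectation_num_alpha[OF S])
next
  case (Suc k)
  have "F \<alpha> * r = lo"
    using F_alpha_pos by (simp add: r_def)
  then have "F \<alpha> * real (n - num_alpha S) * r = real (n - num_alpha S) * lo"
    by (metis mult.commute mult.left_commute)
  then have drift: "F \<alpha> * real (n - num_alpha S) * r - other_fitness S \<le> 0"
    using other_fitness_ge[OF S lo(1)] by linarith
  have "0 \<le> gamblers_ruin n r 1 * r ^ k"
    using lo(2) F_alpha_pos n_pos by (simp add: r_def gamblers_ruin_nonneg)
  moreover have "0 \<le> real (num_alpha S) / (total_fitness S * real (n - 1))"
    using total_fitness_pos[OF S] by simp
  ultimately have "real (num_alpha S) / (total_fitness S * real (n - 1)) *
      (gamblers_ruin n r 1 * r ^ k * (F \<alpha> * real (n - num_alpha S) * r - other_fitness S)) \<le> 0"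
    using drift by (intro mult_nonneg_nonpos) auto
  then show ?thesis
    unfolding next_expectation_gamblers_ruin[OF S Suc] by simp
qed

lemma gamblers_ruin_strictly_subharmonic:
  assumes hi: "\<forall>y\<in>T - {\<alpha>}. F y \<le> hi" and r: "0 < r" "hi / F \<alpha> < r" "r \<noteq> 1"
  obtains c where "0 < c"
    and "\<And>S. is_state S \<Longrightarrow> 0 < num_alpha S \<Longrightarrow> num_alpha S < n \<Longrightarrow>
      gamblers_ruin n r (num_alpha S) + c \<le> next_expectation (\<lambda>S'. gamblers_ruin n r (num_alpha S')) S"
proof -
  \<comment> \<open>n^2 rather than n (n - 1) keeps the drift constant positive also for n = 1\<close>
  define M where "M = max (F \<alpha>) hi"
  define \<kappa> where "\<kappa> = gamblers_ruin n r 1 * min 1 (r ^ n) * (F \<alpha> * r - hi)"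
  have M: "0 < M" using F_alpha_pos by (simp add: M_def)
  have gap: "0 < F \<alpha> * r - hi" using r(2) F_alpha_pos by (simp add: divide_less_eq mult.commute)
  have \<kappa>: "0 < \<kappa>"
    unfolding \<kappa>_def using gap r n_pos by (simp add: gamblers_ruin_pos)
  have "gamblers_ruin n r (num_alpha S) + \<kappa> / (real n ^ 2 * M)
      \<le> next_expectation (\<lambda>S'. gamblers_ruin n r (num_alpha S')) S"
    if S: "is_state S" and X: "0 < num_alpha S" "num_alpha S < n" for S
  proof -
    obtain k where k: "num_alpha S = Suc k" using X(1) gr0_implies_Suc by blast
    have "total_fitness S * real (n - 1) \<le> (real n * M) * real n"
      using total_fitness_le[OF S hi] total_fitness_pos[OF S] by (intro mult_mono) (auto simp: M_def)
    then have "total_fitness S * real (n - 1) \<le> real n ^ 2 * M"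
      by (simp add: power2_eq_square mult_ac)
    then have rate: "1 / (real n ^ 2 * M) \<le> real (num_alpha S) / (total_fitness S * real (n - 1))"
      using X total_fitness_pos[OF S] by (simp add: frac_le)
    have "min 1 (r ^ n) \<le> r ^ k"
      using r(1) k X(2) by (cases "r \<le> 1") (auto simp: power_decreasing intro: min.coboundedI2)
    moreover have "F \<alpha> * r - hi \<le> F \<alpha> * real (n - num_alpha S) * r - other_fitness S"
    proof -
      have "1 * (F \<alpha> * r - hi) \<le> real (n - num_alpha S) * (F \<alpha> * r - hi)"
        using X(2) gap by (intro mult_right_mono) auto
      then show ?thesis using other_fitness_le[OF S hi] by (simp add: algebra_simps)
    qed
    ultimately have "\<kappa> \<le> gamblers_ruin n r 1 * r ^ k * (F \<alpha> * real (n - num_alpha S) * r - other_fitness S)"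
      unfolding \<kappa>_def using gap r n_pos
      by (auto simp: gamblers_ruin_pos mult.assoc intro!: mult_left_mono mult_mono)
    then have "1 / (real n ^ 2 * M) * \<kappa> \<le> real (num_alpha S) / (total_fitness S * real (n - 1)) *
        (gamblers_ruin n r 1 * r ^ k * (F \<alpha> * real (n - num_alpha S) * r - other_fitness S))"
      using rate \<kappa> M total_fitness_pos[OF S] by (intro mult_mono) auto
    then show ?thesis
      unfolding next_expectation_gamblers_ruin[OF S k] by simp
  qed
  moreover have "0 < \<kappa> / (real n ^ 2 * M)" using \<kappa> M n_pos by simp
  ultimately show ?thesis using that by blast
qed

lemma fixation_prob_le_gamblers_ruin:
  assumes S: "is_state S" and lo: "\<forall>y\<in>T - {\<alpha>}. lo \<le> F y" "0 \<le> lo" "lo \<noteq> F \<alpha>"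
  shows "fixation_prob {..<n} (complete_nbhd n) F S \<alpha> \<le> gamblers_ruin n (lo / F \<alpha>) (num_alpha S)"
proof (rule fixation_prob_le_superharmonic[OF _ _ _ S])
  have r: "0 \<le> lo / F \<alpha>" "lo / F \<alpha> \<noteq> 1"
    using lo(2,3) F_alpha_pos by auto
  show "0 \<le> gamblers_ruin n (lo / F \<alpha>) (num_alpha S')" for S'
    using r(1) num_alpha_le by (rule gamblers_ruin_nonneg)
  show "1 \<le> gamblers_ruin n (lo / F \<alpha>) (num_alpha S')" if "all_type {..<n} S' \<alpha>" for S'
    using that r n_pos by (simp add: all_type_iff_num_alpha)
  show "next_expectation (\<lambda>S'. gamblers_ruin n (lo / F \<alpha>) (num_alpha S')) S'
      \<le> gamblers_ruin n (lo / F \<alpha>) (num_alpha S')" if "is_state S'" for S'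
    using gamblers_ruin_superharmonic[OF that lo(1,2)] by simp
qed

lemma gamblers_ruin_le_fixation_prob:
  assumes S: "is_state S" and hi: "\<forall>y\<in>T - {\<alpha>}. F y \<le> hi" "0 < hi" "hi \<noteq> F \<alpha>"
  shows "gamblers_ruin n (hi / F \<alpha>) (num_alpha S) \<le> fixation_prob {..<n} (complete_nbhd n) F S \<alpha>"
proof -
  define r\<^sub>0 where "r\<^sub>0 = hi / F \<alpha>"
  have r\<^sub>0: "0 < r\<^sub>0" "r\<^sub>0 \<noteq> 1"
    using hi(2,3) F_alpha_pos by (auto simp: r\<^sub>0_def)
  \<comment> \<open>for r = hi / F \<alpha> the drift may vanish, so bound all larger r and pass to the limit\<close>
  have bound: "gamblers_ruin n r (num_alpha S) \<le> fixation_prob {..<n} (complete_nbhd n) F S \<alpha>"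
    if r: "r\<^sub>0 < r" "r \<noteq> 1" for r
  proof -
    obtain c where c: "0 < c"
      and drift: "\<And>S. is_state S \<Longrightarrow> 0 < num_alpha S \<Longrightarrow> num_alpha S < n \<Longrightarrow>
        gamblers_ruin n r (num_alpha S) + c \<le> next_expectation (\<lambda>S'. gamblers_ruin n r (num_alpha S')) S"
      using gamblers_ruin_strictly_subharmonic[OF hi(1), of r] r r\<^sub>0 by (auto simp: r\<^sub>0_def)
    show ?thesis
    proof (rule fixation_prob_ge_subharmonic[OF c _ _ S])
      show "gamblers_ruin n r (num_alpha S') \<le> 1" for S'
        using r r\<^sub>0 num_alpha_le by (intro gamblers_ruin_le_one) auto
      show "gamblers_ruin n r (num_alpha S') \<le> 0 \<or>
          gamblers_ruin n r (num_alpha S') + c \<le> next_expectation (\<lambda>S'. gamblers_ruin n r (num_alpha S')) S'"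
        if "is_state S'" "\<not> all_type {..<n} S' \<alpha>" for S'
        using that drift[of S'] num_alpha_le[of S']
        by (cases "num_alpha S' = 0") (auto simp: all_type_iff_num_alpha)
    qed
  qed
  have lim: "((\<lambda>r. gamblers_ruin n r (num_alpha S)) \<longlongrightarrow> gamblers_ruin n r\<^sub>0 (num_alpha S))
      (at_right r\<^sub>0)"
    unfolding gamblers_ruin_def using power_ne_one[of r\<^sub>0 n] r\<^sub>0 n_pos
    by (intro tendsto_intros) auto
  have "eventually (\<lambda>r. r\<^sub>0 < r \<and> r \<noteq> 1) (at_right r\<^sub>0)"
    by (intro eventually_conj eventually_at_right_less eventually_neq_at_within)
  then have "eventually (\<lambda>r. gamblers_ruin n r (num_alpha S) \<le> fixation_prob {..<n} (complete_nbhd n) F S \<alpha>)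
      (at_right r\<^sub>0)"
    by (rule eventually_mono) (use bound in blast)
  then show ?thesis
    unfolding r\<^sub>0_def[symmetric] by (intro tendsto_upperbound[OF lim]) simp_all
qed

end

theorem lemma22:
  fixes n :: nat and T :: "'t set" and f :: "'t \<Rightarrow> rat"
    and \<alpha> \<beta>p \<beta>m :: 't and M0 :: "nat \<Rightarrow> 't" and i :: nat
  assumes "n > 0"
    and "\<forall>\<beta>\<in>T. f \<beta> \<ge> 1"
    and "\<alpha> \<in> T"
    and "\<beta>p \<in> T - {\<alpha>}" and "\<forall>\<beta>\<in>T - {\<alpha>}. f \<beta> \<le> f \<beta>p"
    and "\<beta>m \<in> T - {\<alpha>}" and "\<forall>\<beta>\<in>T - {\<alpha>}. f \<beta>m \<le> f \<beta>"
    and "f \<alpha> \<noteq> f \<beta>p" and "f \<alpha> \<noteq> f \<beta>m"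
    and "\<forall>v<n. M0 v \<in> T"
    and "i = card {v\<in>{..<n}. M0 v = \<alpha>}"
  shows "(1 - (real_of_rat (f \<beta>p / f \<alpha>)) ^ i) / (1 - (real_of_rat (f \<beta>p / f \<alpha>)) ^ n)
           \<le> fixation_prob {..<n} (complete_nbhd n) (\<lambda>x. real_of_rat (f x)) M0 \<alpha>
       \<and> fixation_prob {..<n} (complete_nbhd n) (\<lambda>x. real_of_rat (f x)) M0 \<alpha>
           \<le> (1 - (real_of_rat (f \<beta>m / f \<alpha>)) ^ i) / (1 - (real_of_rat (f \<beta>m / f \<alpha>)) ^ n)"
proof -
  define F where "F x = real_of_rat (f x)" for x
  have F_ge_1: "1 \<le> F x" if "x \<in> T" for x
    using assms(2) that by (simp add: F_def of_rat_less_eq [of 1, simplified])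
  interpret moran_complete n T F \<alpha>
    using assms(1,3) F_ge_1 by unfold_locales (auto simp: complete_nbhd_def intro: less_le_trans [OF zero_less_one])
  have M0: "is_state M0" and i: "num_alpha M0 = i"
    using assms(10,11) by (simp_all add: is_state_def num_alpha_def)
  have ratio: "real_of_rat (f \<beta> / f \<alpha>) = F \<beta> / F \<alpha>" for \<beta>
    by (simp add: F_def of_rat_divide)
  have hi: "\<forall>y\<in>T - {\<alpha>}. F y \<le> F \<beta>p" "0 < F \<beta>p" "F \<beta>p \<noteq> F \<alpha>"
    using assms(4,5,8) F_ge_1[of \<beta>p] by (auto simp: F_def of_rat_less_eq)
  have lo: "\<forall>y\<in>T - {\<alpha>}. F \<beta>m \<le> F y" "0 \<le> F \<beta>m" "F \<beta>m \<noteq> F \<alpha>"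
    using assms(6,7,9) F_ge_1[of \<beta>m] by (auto simp: F_def of_rat_less_eq)
  have "gamblers_ruin n (F \<beta>p / F \<alpha>) i \<le> fixation_prob {..<n} (complete_nbhd n) F M0 \<alpha>"
    using gamblers_ruin_le_fixation_prob[OF M0 hi] i by simp
  moreover have "fixation_prob {..<n} (complete_nbhd n) F M0 \<alpha> \<le> gamblers_ruin n (F \<beta>m / F \<alpha>) i"
    using fixation_prob_le_gamblers_ruin[OF M0 lo] i by simp
  ultimately show ?thesis
    by (simp add: ratio gamblers_ruin_def F_def [abs_def])
qed

end
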